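(* Let $S_2=\epsilon_2$, $S_3=\epsilon_3$ and $S_n=K_{n-3}+\epsilon_3$ for $n\ge4$, and let $R(r)=\frac{1}{2\sqrt{1-r^2}}$ with $R^j$ its $j$-fold composition ($R^0$ the identity). For $n\in\{2,3\}$, $S_n$ admits a spherical embedding of dimension $n-1$ and radius $r$ for every $0<r<1$. For $n\ge4$, $S_n$ admits a spherical embedding of dimension $n-1$ and radius $r$ for every $r$ with $R^{n-4}(1/2)<r<1$, but admits no spherical embedding of dimension $n-1$ and radius $r$ with $r<R^{n-4}(1/2)$.
   Context: $\epsilon_k$ is the graph with $k$ vertices and no edges; $G+H$ is obtained from disjoint copies of $G$ and $H$ by adding all edges between them. A unit-distance embedding of a graph $G$ in $\mathbb{R}^n$ is an injective map $f$ from the vertex set of $G$ to $\mathbb{R}^n$ such that $|f(u)-f(v)|=1$ for every edge $uv$ and no point $f(w)$ lies on the segment $[f(u),f(v)]$ for an edge $uv$ with $w\notin\{u,v\}$. $G$ admits a spherical embedding of dimension $k$ and radius $r$ if $G$ has a unit-distance embedding in $\mathbb{R}^k$ all of whose vertices lie on a sphere $\{x\in\mathbb{R}^k:|x-c|=r\}$. *)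

theory Defs
  imports "HOL-Analysis.Analysis"
begin

text \<open>Points of R^k are represented as functions nat => real vanishing at
  coordinates i >= k (coordinates 0..k-1).\<close>

definition in_Rn :: "nat \<Rightarrow> (nat \<Rightarrow> real) \<Rightarrow> bool" where
  "in_Rn k x \<longleftrightarrow> (\<forall>i\<ge>k. x i = 0)"

definition edist :: "nat \<Rightarrow> (nat \<Rightarrow> real) \<Rightarrow> (nat \<Rightarrow> real) \<Rightarrow> real" where
  "edist k x y = sqrt (\<Sum>i<k. (x i - y i)^2)"

definition on_segment :: "(nat \<Rightarrow> real) \<Rightarrow> (nat \<Rightarrow> real) \<Rightarrow> (nat \<Rightarrow> real) \<Rightarrow> bool" where
  "on_segment w x y \<longleftrightarrow> (\<exists>t::real. 0 \<le> t \<and> t \<le> 1 \<and> (\<forall>i. w i = (1 - t) * x i + t * y i))"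

text \<open>A simple graph is given by a vertex set V and a symmetric irreflexive adjacency E.\<close>

definition unit_distance_embedding ::
  "'a set \<Rightarrow> ('a \<Rightarrow> 'a \<Rightarrow> bool) \<Rightarrow> nat \<Rightarrow> ('a \<Rightarrow> nat \<Rightarrow> real) \<Rightarrow> bool" where
  "unit_distance_embedding V E k f \<longleftrightarrow>
     inj_on f V \<and> (\<forall>v\<in>V. in_Rn k (f v)) \<and>
     (\<forall>u\<in>V. \<forall>v\<in>V. E u v \<longrightarrow> edist k (f u) (f v) = 1) \<and>
     (\<forall>u\<in>V. \<forall>v\<in>V. \<forall>w\<in>V. E u v \<and> w \<noteq> u \<and> w \<noteq> v \<longrightarrow> \<not> on_segment (f w) (f u) (f v))"

definition spherical_embedding ::
  "'a set \<Rightarrow> ('a \<Rightarrow> 'a \<Rightarrow> bool) \<Rightarrow> nat \<Rightarrow> real \<Rightarrow> bool" where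
  "spherical_embedding V E k r \<longleftrightarrow>
     (\<exists>f c. unit_distance_embedding V E k f \<and> in_Rn k c \<and>
            (\<forall>v\<in>V. edist k (f v) c = r))"

text \<open>The graph S_n on vertex set {0..<n}: for n >= 4 it is K_{n-3} + eps_3, with
  the clique on {0..<n-3} and the independent triple {n-3,n-2,n-1}; two distinct
  vertices are adjacent iff at least one of them lies in the clique part.
  For n <= 3 (n-3 = 0 in nat) there are no edges, i.e. S_n = eps_n.\<close>

definition S_vert :: "nat \<Rightarrow> nat set" where
  "S_vert n = {0..<n}"

definition S_adj :: "nat \<Rightarrow> nat \<Rightarrow> nat \<Rightarrow> bool" where
  "S_adj n u v \<longleftrightarrow> u \<noteq> v \<and> u < n \<and> v < n \<and> (u < n - 3 \<or> v < n - 3)"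

definition Rfun :: "real \<Rightarrow> real" where
  "Rfun r = 1 / (2 * sqrt (1 - r^2))"

end

theory Submission
  imports Defs
begin

text \<open>A sphere meets a segment only in its endpoints, so unit-distance drawings on a sphere
  are automatically non-degenerate. For n \<ge> 4 the clique of S_n together with one vertex of the
  independent triple is a K_{n-2}; summing squared distances over all pairs shows that a unit
  K_{n-2} on a sphere needs squared radius at least (n-3)/(2(n-2)), which is the square of
  R^{n-4}(1/2). Conversely, put the clique at the points e_u / sqrt 2 and the triple on a small
  circle in the two remaining coordinates, shifted along the diagonal (1,...,1) of the clique
  coordinates; with the centre on that diagonal as well, the two diagonal offsets and the circle
  radius can be solved for exactly when r^2 exceeds that bound. For n \<le> 3 there are no edges and
  a circle of radius r suffices.\<close>

lemma edist_eq_iff: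
  assumes "r \<ge> 0"
  shows "edist k x y = r \<longleftrightarrow> (\<Sum>i<k. (x i - y i)^2) = r^2"
proof -
  have "(\<Sum>i<k. (x i - y i)^2) \<ge> 0" by (intro sum_nonneg) auto
  then show ?thesis
    unfolding edist_def using assms by (metis real_sqrt_pow2 real_sqrt_unique)
qed

lemma edist_nonneg: "edist k x y \<ge> 0"
  unfolding edist_def by (intro real_sqrt_ge_zero sum_nonneg) simp

lemma on_segment_sphere_endpoint:
  fixes x y w c :: "nat \<Rightarrow> real"
  assumes "(\<Sum>i<k. (x i - c i)^2) = R" "(\<Sum>i<k. (y i - c i)^2) = R"
    "(\<Sum>i<k. (w i - c i)^2) = R" "(\<Sum>i<k. (x i - y i)^2) \<noteq> 0"
    and "\<forall>i. w i = (1 - t) * x i + t * y i"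
  shows "t = 0 \<or> t = 1"
proof -
  have "(w i - c i)^2 = (1-t)*(x i - c i)^2 + t*(y i - c i)^2 - t*(1-t)*(x i - y i)^2" for i
    unfolding assms(5)[rule_format] by algebra
  then have "(\<Sum>i<k. (w i - c i)^2) = (1-t)*(\<Sum>i<k. (x i - c i)^2) + t*(\<Sum>i<k. (y i - c i)^2)
      - t*(1-t)*(\<Sum>i<k. (x i - y i)^2)"
    by (simp add: sum.distrib sum_subtractf sum_distrib_left)
  then have "t * (1 - t) * (\<Sum>i<k. (x i - y i)^2) = 0"
    using assms(1-3) by (simp add: algebra_simps)
  then show ?thesis using assms(4) by auto
qed

lemma spherical_embeddingI:
  assumes inj: "inj_on f V" and "\<forall>v\<in>V. in_Rn k (f v)" "in_Rn k c" and "r \<ge> 0"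
    and sphere: "\<forall>v\<in>V. (\<Sum>i<k. (f v i - c i)^2) = r^2"
    and edge: "\<forall>u\<in>V. \<forall>v\<in>V. E u v \<longrightarrow> (\<Sum>i<k. (f u i - f v i)^2) = 1"
  shows "spherical_embedding V E k r"
proof -
  have "\<not> on_segment (f w) (f u) (f v)"
    if "u \<in> V" "v \<in> V" "w \<in> V" "E u v" "w \<noteq> u" "w \<noteq> v" for u v w
  proof
    assume "on_segment (f w) (f u) (f v)"
    then obtain t where t: "\<forall>i. f w i = (1 - t) * f u i + t * f v i"
      unfolding on_segment_def by blast
    have "t = 0 \<or> t = 1"
      by (rule on_segment_sphere_endpoint[OF _ _ _ _ t, where c = c and R = "r^2" and k = k])
        (use sphere edge that in auto)
    then have "f w = f u \<or> f w = f v" using t by auto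
    then show False using inj that by (metis inj_on_def)
  qed
  then show ?thesis
    unfolding spherical_embedding_def unit_distance_embedding_def
    using assms edist_eq_iff[OF \<open>r \<ge> 0\<close>] edist_eq_iff[of 1] by auto
qed

lemma half_inverse_sqrt: "1 / (2 * sqrt a) = sqrt (1 / (4 * a))"
  by (simp add: real_sqrt_divide real_sqrt_mult)

lemma Rfun_funpow_half: "(Rfun ^^ j) (1/2) = sqrt ((real j + 1) / (2 * (real j + 2)))"
proof (induction j)
  case 0
  then show ?case by (simp add: real_sqrt_divide)
next
  case (Suc j)
  have "1 - (sqrt ((real j + 1) / (2 * (real j + 2))))^2 = (real j + 3) / (2 * (real j + 2))"
    by (simp add: field_simps)
  then have "(Rfun ^^ Suc j) (1/2) = 1 / (2 * sqrt ((real j + 3) / (2 * (real j + 2))))"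
    by (simp add: Suc.IH Rfun_def)
  also have "\<dots> = sqrt (1 / (4 * ((real j + 3) / (2 * (real j + 2)))))"
    by (rule half_inverse_sqrt)
  also have "1 / (4 * ((real j + 3) / (2 * (real j + 2)))) = (real j + 2) / (2 * (real j + 3))"
    by (simp add: field_simps)
  finally show ?case by (simp add: add.commute)
qed

lemma unit_simplex_on_sphere_radius_ge:
  fixes q :: "nat \<Rightarrow> nat \<Rightarrow> real"
  assumes "K > 0"
    and unit: "\<forall>a<K. \<forall>b<K. a \<noteq> b \<longrightarrow> (\<Sum>i<N. (q a i - q b i)^2) = 1"
    and sphere: "\<forall>a<K. (\<Sum>i<N. (q a i - c i)^2) = R"
  shows "(real K - 1) / (2 * real K) \<le> R"
proof -
  have coordinate:
    "(\<Sum>a<K. \<Sum>b<K. (q a i - q b i)^2) \<le> 2 * real K * (\<Sum>a<K. (q a i - c i)^2)" for i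
  proof -
    define y where "y a = q a i - c i" for a
    have "(\<Sum>a<K. \<Sum>b<K. (q a i - q b i)^2) = (\<Sum>a<K. \<Sum>b<K. (y a)^2 + (y b)^2 - 2 * y a * y b)"
      by (simp add: y_def power2_eq_square algebra_simps)
    also have "\<dots> = 2 * real K * (\<Sum>a<K. (y a)^2) - 2 * (\<Sum>a<K. y a)^2"
      by (simp add: sum.distrib sum_subtractf sum_distrib_left sum_distrib_right
          power2_eq_square algebra_simps)
    also have "\<dots> \<le> 2 * real K * (\<Sum>a<K. (y a)^2)" by simp
    finally show ?thesis by (simp add: y_def)
  qed
  have "real K * (real K - 1) = (\<Sum>a<K. \<Sum>b<K. 1 - (if b = a then 1 else 0))"
    by (simp add: sum_subtractf)
  also have "\<dots> = (\<Sum>a<K. \<Sum>b<K. \<Sum>i<N. (q a i - q b i)^2)"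
    using unit by (intro sum.cong refl) auto
  also have "\<dots> = (\<Sum>i<N. \<Sum>a<K. \<Sum>b<K. (q a i - q b i)^2)"
    by (simp only: sum.swap[of _ "{..<N}"])
  also have "\<dots> \<le> (\<Sum>i<N. 2 * real K * (\<Sum>a<K. (q a i - c i)^2))"
    by (rule sum_mono) (rule coordinate)
  also have "\<dots> = 2 * real K * (\<Sum>a<K. \<Sum>i<N. (q a i - c i)^2)"
    by (simp add: sum_distrib_left sum.swap[of _ "{..<N}"])
  also have "\<dots> = real K * (2 * real K * R)" using sphere by simp
  finally have "real K - 1 \<le> 2 * real K * R"
    using \<open>K > 0\<close> by (simp add: mult_le_cancel_left_pos)
  then show ?thesis using \<open>K > 0\<close> by (simp add: pos_divide_le_eq mult.commute)
qed

lemma S_not_spherical_embedding: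
  assumes "n \<ge> 4" and "r < (Rfun ^^ (n - 4)) (1/2)"
  shows "\<not> spherical_embedding (S_vert n) (S_adj n) (n - 1) r"
proof
  assume "spherical_embedding (S_vert n) (S_adj n) (n - 1) r"
  then obtain f c where ude: "unit_distance_embedding (S_vert n) (S_adj n) (n - 1) f"
    and sphere: "\<forall>v\<in>S_vert n. edist (n - 1) (f v) c = r"
    unfolding spherical_embedding_def by blast
  have "r \<ge> 0" using sphere edist_nonneg \<open>n \<ge> 4\<close> by (force simp: S_vert_def)
  text \<open>The clique together with the independent vertex n - 3 spans a K_{n-2}.\<close>
  have "\<forall>a<n-2. \<forall>b<n-2. a \<noteq> b \<longrightarrow> (\<Sum>i<n - 1. (f a i - f b i)^2) = 1"
  proof (intro allI impI)
    fix a b assume "a < n - 2" "b < n - 2" "a \<noteq> b"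
    then have "S_adj n a b" "a \<in> S_vert n" "b \<in> S_vert n"
      by (auto simp: S_adj_def S_vert_def)
    then show "(\<Sum>i<n - 1. (f a i - f b i)^2) = 1"
      using ude edist_eq_iff[of 1] unfolding unit_distance_embedding_def by auto
  qed
  moreover have "\<forall>a<n-2. (\<Sum>i<n - 1. (f a i - c i)^2) = r^2"
    using sphere edist_eq_iff[OF \<open>r \<ge> 0\<close>] by (auto simp: S_vert_def)
  ultimately have "(real (n - 2) - 1) / (2 * real (n - 2)) \<le> r^2"
    using \<open>n \<ge> 4\<close> by (intro unit_simplex_on_sphere_radius_ge) auto
  moreover have "(real (n - 2) - 1) / (2 * real (n - 2)) = (real (n - 4) + 1) / (2 * (real (n - 4) + 2))"
    using \<open>n \<ge> 4\<close> by (simp add: of_nat_diff)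
  ultimately have "(Rfun ^^ (n - 4)) (1/2) \<le> r"
    unfolding Rfun_funpow_half using \<open>r \<ge> 0\<close> by (simp add: real_le_lsqrt)
  then show False using assms(2) by simp
qed

definition circle_triple :: "nat \<Rightarrow> real \<Rightarrow> nat \<Rightarrow> nat \<Rightarrow> real" where
  "circle_triple m \<sigma> v j =
     (if j = m then (if v = m then \<sigma> else if v = m + 1 then - \<sigma> else 0)
      else if j = m + 1 then (if v = m + 2 then \<sigma> else 0) else 0)"

lemma circle_triple_norm:
  "m \<le> v \<Longrightarrow> v < m + 3 \<Longrightarrow>
    (circle_triple m \<sigma> v m)^2 + (circle_triple m \<sigma> v (Suc m))^2 = \<sigma>^2"
  by (auto simp: circle_triple_def numeral_3_eq_3 less_Suc_eq)

lemma circle_triple_eq_iff: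
  assumes "\<sigma> \<noteq> 0" "m \<le> u" "u < m + 3" "m \<le> v" "v < m + 3"
  shows "circle_triple m \<sigma> u m = circle_triple m \<sigma> v m \<and>
    circle_triple m \<sigma> u (Suc m) = circle_triple m \<sigma> v (Suc m) \<longleftrightarrow> u = v"
  using assms by (auto simp: circle_triple_def numeral_3_eq_3 less_Suc_eq)

lemma S_spherical_embedding_small:
  assumes "n \<in> {2, 3}" and "r > 0"
  shows "spherical_embedding (S_vert n) (S_adj n) (n - 1) r"
proof (rule spherical_embeddingI)
  show "inj_on (circle_triple 0 r) (S_vert n)"
  proof (rule inj_onI)
    fix u v assume "u \<in> S_vert n" "v \<in> S_vert n" "circle_triple 0 r u = circle_triple 0 r v"
    then show "u = v"
      using assms circle_triple_eq_iff[of r 0 u v] by (auto simp: S_vert_def)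
  qed
  show "\<forall>v\<in>S_vert n. in_Rn (n - 1) (circle_triple 0 r v)"
    using assms by (auto simp: in_Rn_def S_vert_def circle_triple_def)
  show "\<forall>v\<in>S_vert n. (\<Sum>i<n - 1. (circle_triple 0 r v i - 0)^2) = r^2"
    using assms by (auto simp: S_vert_def circle_triple_def numeral_2_eq_2 numeral_3_eq_3 less_Suc_eq)
  show "\<forall>u\<in>S_vert n. \<forall>v\<in>S_vert n. S_adj n u v \<longrightarrow>
      (\<Sum>i<n - 1. (circle_triple 0 r u i - circle_triple 0 r v i)^2) = 1"
    using assms by (auto simp: S_adj_def)
qed (use assms in \<open>auto simp: in_Rn_def\<close>)

text \<open>The points e_u / sqrt 2 (u < m) form a unit simplex with circumcentre
  sqrt (1/2) / m \<cdot> (1,...,1) and squared circumradius 1/2 - 1/(2m).\<close>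
lemma simplex_vertex_diagonal_dist:
  fixes u m :: nat and t :: real
  assumes "u < m"
  shows "(\<Sum>j<m. ((if j = u then sqrt (1/2) else 0) - (sqrt (1/2) / real m + t))^2)
    = 1/2 - 1/(2 * real m) + real m * t^2"
proof -
  define h :: real where "h = sqrt (1/2)"
  have "real m > 0" using assms by simp
  have "h^2 = 1/2" by (simp add: h_def)
  have "(\<Sum>j<m. ((if j = u then h else 0) - (h / real m + t))^2)
      = (\<Sum>j<m. (if j = u then h^2 - 2 * h * (h / real m + t) else 0) + (h / real m + t)^2)"
    by (intro sum.cong refl) (auto simp: power2_eq_square algebra_simps)
  also have "\<dots> = h^2 - 2 * h * (h / real m + t) + real m * (h / real m + t)^2"
    using assms by (simp add: sum.distrib)
  also have "\<dots> = h^2 - h^2 / real m + real m * t^2"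
    using \<open>real m > 0\<close> by (simp add: power2_eq_square field_simps)
  finally show ?thesis unfolding h_def[symmetric] using \<open>h^2 = 1/2\<close> by simp
qed

lemma S_spherical_embedding_of_offsets:
  fixes m :: nat and r s t \<sigma> :: real
  assumes "r \<ge> 0" "\<sigma> \<noteq> 0"
    and clique_centre: "1/2 - 1/(2 * real m) + real m * s^2 = r^2"
    and clique_triple: "1/2 - 1/(2 * real m) + real m * t^2 + \<sigma>^2 = 1"
    and triple_centre: "real m * (t - s)^2 + \<sigma>^2 = r^2"
  shows "spherical_embedding {0..<m+3} (S_adj (m+3)) (m+2) r"
proof -
  define p where "p u j =
    (if j < m then (if u < m then (if j = u then sqrt (1/2) else 0) else sqrt (1/2) / real m + t)
     else circle_triple m \<sigma> u j)" for u j
  define c where "c j = (if j < m then sqrt (1/2) / real m + s else 0)" for j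
  have split: "(\<Sum>j<m+2. F j) = (\<Sum>j<m. F j) + F m + F (Suc m)" for F :: "nat \<Rightarrow> real"
    by (simp add: numeral_2_eq_2)
  have unit: "(\<Sum>j<m+2. (p u j - p v j)^2) = 1" if "u < m" "v < m + 3" "u \<noteq> v" for u v
  proof (cases "v < m")
    case True
    have "(\<Sum>j<m. (p u j - p v j)^2) = (\<Sum>j<m. (if j = u then 1/2 else 0) + (if j = v then 1/2 else 0))"
      using that True by (intro sum.cong refl) (auto simp: p_def)
    also have "\<dots> = 1" using that True by (simp add: sum.distrib)
    finally show ?thesis using that True by (simp add: split p_def circle_triple_def)
  next
    case False
    have "(\<Sum>j<m. (p u j - p v j)^2) = 1/2 - 1/(2 * real m) + real m * t^2"
      using that False simplex_vertex_diagonal_dist[of u m t] by (simp add: p_def)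
    moreover have "(p u m - p v m)^2 + (p u (Suc m) - p v (Suc m))^2 = \<sigma>^2"
      using that False circle_triple_norm[of m v \<sigma>] by (simp add: p_def circle_triple_def)
    ultimately show ?thesis using clique_triple by (simp add: split)
  qed
  have sphere: "(\<Sum>j<m+2. (p v j - c j)^2) = r^2" if "v < m + 3" for v
  proof (cases "v < m")
    case True
    have "(\<Sum>j<m. (p v j - c j)^2) = 1/2 - 1/(2 * real m) + real m * s^2"
      using True simplex_vertex_diagonal_dist[of v m s] by (simp add: p_def c_def)
    then show ?thesis using True clique_centre by (simp add: split p_def c_def circle_triple_def)
  next
    case False
    have "(\<Sum>j<m. (p v j - c j)^2) = real m * (t - s)^2"
      using False by (simp add: p_def c_def)
    moreover have "(p v m - c m)^2 + (p v (Suc m) - c (Suc m))^2 = \<sigma>^2"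
      using that False circle_triple_norm[of m v \<sigma>] by (simp add: p_def c_def)
    ultimately show ?thesis using triple_centre by (simp add: split)
  qed
  have adjacent_unit: "(\<Sum>j<m+2. (p u j - p v j)^2) = 1"
    if "u < m + 3" "v < m + 3" "u \<noteq> v" "u < m \<or> v < m" for u v
    using that unit unit[of v u] by (auto simp: power2_commute)
  show ?thesis
  proof (rule spherical_embeddingI)
    show "inj_on p {0..<m+3}"
    proof (rule inj_onI, rule ccontr)
      fix u v assume uv: "u \<in> {0..<m+3}" "v \<in> {0..<m+3}" "p u = p v" "u \<noteq> v"
      show False
      proof (cases "u < m \<or> v < m")
        case True
        then show False using adjacent_unit[of u v] uv by simp
      next
        case False
        have "circle_triple m \<sigma> u m = circle_triple m \<sigma> v m \<and>
            circle_triple m \<sigma> u (Suc m) = circle_triple m \<sigma> v (Suc m)"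
          using fun_cong[OF \<open>p u = p v\<close>, of m] fun_cong[OF \<open>p u = p v\<close>, of "Suc m"]
          by (simp add: p_def)
        then show False
          using False uv circle_triple_eq_iff[OF \<open>\<sigma> \<noteq> 0\<close>, of m u v] by simp
      qed
    qed
    show "\<forall>v\<in>{0..<m+3}. in_Rn (m+2) (p v)" "in_Rn (m+2) c"
      by (auto simp: in_Rn_def p_def c_def circle_triple_def)
    show "\<forall>v\<in>{0..<m+3}. (\<Sum>j<m+2. (p v j - c j)^2) = r^2"
      using sphere by simp
    show "\<forall>u\<in>{0..<m+3}. \<forall>v\<in>{0..<m+3}. S_adj (m+3) u v \<longrightarrow>
        (\<Sum>j<m+2. (p u j - p v j)^2) = 1"
      using adjacent_unit by (auto simp: S_adj_def)
  qed (rule \<open>r \<ge> 0\<close>)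
qed

lemma S_offsets_exist:
  fixes m :: nat and r :: real
  assumes "m > 0" and "real m / (2 * (real m + 1)) < r^2"
  obtains s t \<sigma> :: real where "\<sigma> \<noteq> 0"
    "1/2 - 1/(2 * real m) + real m * s^2 = r^2"
    "1/2 - 1/(2 * real m) + real m * t^2 + \<sigma>^2 = 1"
    "real m * (t - s)^2 + \<sigma>^2 = r^2"
proof -
  define M where "M = real m"
  have "M > 0" using assms(1) by (simp add: M_def)
  define D where "D = r^2 - 1/2 + 1/(2 * M)"
  have "M / (2 * (M + 1)) - 1/2 + 1/(2 * M) = 1 / (2 * M * (M + 1))"
    using \<open>M > 0\<close> by (simp add: field_split_simps)
  then have D_gt: "1 / (2 * M * (M + 1)) < D"
    using assms(2) by (simp add: D_def M_def)
  then have "D > 0" using \<open>M > 0\<close> by (smt (verit) divide_pos_pos mult_pos_pos)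
  define s where "s = sqrt (D / M)"
  have "s > 0" "M * s^2 = D" using \<open>D > 0\<close> \<open>M > 0\<close> by (simp_all add: s_def)
  text \<open>t is chosen so that 2 M t s = 1 / M, which makes the triple equidistant from the centre.\<close>
  define t where "t = 1 / (2 * M^2 * s)"
  have "M * t^2 = 1 / (4 * M^2 * D)"
    using \<open>M * s^2 = D\<close>[symmetric] \<open>s > 0\<close> \<open>M > 0\<close>
    by (simp add: t_def power2_eq_square field_simps)
  also have "\<dots> < (M + 1) / (2 * M)"
  proof -
    have "1 < D * (2 * M * (M + 1))"
      using D_gt \<open>M > 0\<close> by (simp add: pos_divide_less_eq)
    then have "2 * M * 1 < 2 * M * (D * (2 * M * (M + 1)))"
      using \<open>M > 0\<close> by (intro mult_strict_left_mono) auto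
    then have "2 * M < 4 * M^2 * D * (M + 1)"
      by (simp add: power2_eq_square algebra_simps)
    then show ?thesis using \<open>M > 0\<close> \<open>D > 0\<close> by (simp add: field_simps)
  qed
  finally have "M * t^2 < (M + 1) / (2 * M)" .
  define \<sigma> where "\<sigma> = sqrt ((M + 1) / (2 * M) - M * t^2)"
  have \<sigma>_sq: "\<sigma>^2 = (M + 1) / (2 * M) - M * t^2"
    using \<open>M * t^2 < (M + 1) / (2 * M)\<close> by (simp add: \<sigma>_def)
  show thesis
  proof
    show "\<sigma> \<noteq> 0" using \<open>M * t^2 < (M + 1) / (2 * M)\<close> by (simp add: \<sigma>_def)
    show "1/2 - 1/(2 * real m) + real m * s^2 = r^2"
      using \<open>M * s^2 = D\<close> by (simp add: D_def M_def)
    show "1/2 - 1/(2 * real m) + real m * t^2 + \<sigma>^2 = 1"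
      using \<sigma>_sq \<open>M > 0\<close> by (simp add: M_def field_simps)
    have "2 * M * t * s = 1 / M"
      using \<open>s > 0\<close> \<open>M > 0\<close> by (simp add: t_def power2_eq_square field_simps)
    have "real m * (t - s)^2 + \<sigma>^2 = (M * t^2 + \<sigma>^2) - 2 * M * t * s + M * s^2"
      by (simp add: M_def power2_eq_square algebra_simps)
    also have "\<dots> = (M + 1) / (2 * M) - 1 / M + D"
      using \<sigma>_sq \<open>2 * M * t * s = 1 / M\<close> \<open>M * s^2 = D\<close> by simp
    also have "\<dots> = r^2"
      using \<open>M > 0\<close> by (simp add: D_def field_split_simps)
    finally show "real m * (t - s)^2 + \<sigma>^2 = r^2" .
  qed
qed

lemma S_spherical_embedding:
  assumes "n \<ge> 4" and "(Rfun ^^ (n - 4)) (1/2) < r"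
  shows "spherical_embedding (S_vert n) (S_adj n) (n - 1) r"
proof -
  define m where "m = n - 3"
  have n: "n = m + 3" "n - 4 = m - 1" and "m > 0" using assms(1) by (simp_all add: m_def)
  have threshold: "(Rfun ^^ (n - 4)) (1/2) = sqrt (real m / (2 * (real m + 1)))"
    using \<open>m > 0\<close> by (simp add: n Rfun_funpow_half of_nat_diff add.commute)
  then have "r > 0"
    using assms(2) by (smt (verit) real_sqrt_ge_zero divide_nonneg_nonneg of_nat_0_le_iff)
  then have "sqrt (real m / (2 * (real m + 1))) < sqrt (r^2)"
    using assms(2) threshold by simp
  then have "real m / (2 * (real m + 1)) < r^2"
    by (simp only: real_sqrt_less_iff)
  then obtain s t \<sigma> where offsets: "\<sigma> \<noteq> 0"
      "1/2 - 1/(2 * real m) + real m * s^2 = r^2"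
      "1/2 - 1/(2 * real m) + real m * t^2 + \<sigma>^2 = 1"
      "real m * (t - s)^2 + \<sigma>^2 = r^2"
    by (rule S_offsets_exist[OF \<open>m > 0\<close>])
  have "spherical_embedding {0..<m+3} (S_adj (m+3)) (m+2) r"
    using \<open>r > 0\<close> by (intro S_spherical_embedding_of_offsets[OF _ offsets]) simp
  then show ?thesis by (simp add: n S_vert_def)
qed

theorem mainTheorem19:
  shows "(\<forall>n\<in>{2,3}. \<forall>r::real. 0 < r \<and> r < 1 \<longrightarrow>
            spherical_embedding (S_vert n) (S_adj n) (n - 1) r)
       \<and> (\<forall>n\<ge>4.
            (\<forall>r::real. (Rfun ^^ (n - 4)) (1/2) < r \<and> r < 1 \<longrightarrow>
               spherical_embedding (S_vert n) (S_adj n) (n - 1) r)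
          \<and> (\<forall>r::real. r < (Rfun ^^ (n - 4)) (1/2) \<longrightarrow>
               \<not> spherical_embedding (S_vert n) (S_adj n) (n - 1) r))"
  using S_spherical_embedding_small S_spherical_embedding S_not_spherical_embedding by blast

end
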